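(* (1) For $0\le t\le2$, $\mathfrak{e}^C_t\in\mathcal{E}(\mathcal{P}^{s+}_{3,5})$. (2) If $0<t\le2$, $t\ne1$, and $f\in\mathcal{P}^{s+}_{3,5}$ satisfies $f(t,1,1)=f(1,1,1)=f(0,1,1)=0$, then $f=\lambda\mathfrak{e}^C_t$ for some $\lambda\ge0$. (3) If $f\in\mathcal{P}^{s+}_{3,5}$ satisfies $f(1,1,1)=f(0,1,1)=f_a(0,1,1)=f_{aa}(0,1,1)=0$, then $f=\lambda\mathfrak{e}^C_0$ for some $\lambda\ge0$. (4) If $f\in\mathcal{P}^{s+}_{3,5}$ satisfies $f(0,1,1)=f(1,1,1)=f_{aa}(1,1,1)=0$, then $f=\lambda\mathfrak{e}^C_1$ for some $\lambda\ge0$.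
   Context: Let $a,b,c$ be variables. For nonnegative integers $m,n$ put $S_{m,n}=a^mb^n+b^mc^n+c^ma^n$, $S_n=S_{n,0}=a^n+b^n+c^n$, $T_{m,n}=S_{m,n}+S_{n,m}$, $U=abc$ (so $S_{1,1}=ab+bc+ca$). Let $\mathcal{H}^s_{3,5}$ be the real vector space of symmetric homogeneous polynomials of degree 5 in $\mathbb{R}[a,b,c]$; it has basis $s_0=S_5-US_{1,1}$, $s_1=T_{4,1}-2US_{1,1}$, $s_2=T_{3,2}-2US_{1,1}$, $s_3=US_2-US_{1,1}$, $s_4=US_{1,1}$. Let $\mathcal{P}^{s+}_{3,5}=\{f\in\mathcal{H}^s_{3,5}: f(a,b,c)\ge 0\text{ for all }a,b,c\ge0\}$. For a closed convex cone $\mathcal{P}$, an element $f\in\mathcal{P}\setminus\{0\}$ is extremal if whenever $f=g+h$ with $g,h\in\mathcal{P}$ we have $g,h\in\mathbb{R}_{\ge0}f$; $\mathcal{E}(\mathcal{P})$ is the set of extremal elements. Subscripts denote partial derivatives: $f_a=\partial f/\partial a$, $f_{aa}=\partial^2f/\partial a^2$, $f_{ab}=\partial^2f/\partial a\partial b$, etc. Family C: $\mathfrak{e}^C_t=s_0-(t+1)s_1+ts_2+(t+1)^2s_3$. *)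

theory Defs
  imports "HOL-Analysis.Analysis"
begin

type_synonym poly3 = "real \<Rightarrow> real \<Rightarrow> real \<Rightarrow> real"

definition S2 :: "nat \<Rightarrow> nat \<Rightarrow> poly3" where
  "S2 m n = (\<lambda>a b c. a^m * b^n + b^m * c^n + c^m * a^n)"

definition T2 :: "nat \<Rightarrow> nat \<Rightarrow> poly3" where
  "T2 m n = (\<lambda>a b c. S2 m n a b c + S2 n m a b c)"

definition U3 :: poly3 where
  "U3 = (\<lambda>a b c. a * b * c)"

definition s0 :: poly3 where "s0 = (\<lambda>a b c. S2 5 0 a b c - U3 a b c * S2 1 1 a b c)"
definition s1 :: poly3 where "s1 = (\<lambda>a b c. T2 4 1 a b c - 2 * U3 a b c * S2 1 1 a b c)"
definition s2 :: poly3 where "s2 = (\<lambda>a b c. T2 3 2 a b c - 2 * U3 a b c * S2 1 1 a b c)"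
definition s3 :: poly3 where "s3 = (\<lambda>a b c. U3 a b c * S2 2 0 a b c - U3 a b c * S2 1 1 a b c)"
definition s4 :: poly3 where "s4 = (\<lambda>a b c. U3 a b c * S2 1 1 a b c)"

text \<open>Symmetric homogeneous quintics, as polynomial functions: the span of the basis s0..s4.\<close>
definition H35s :: "poly3 set" where
  "H35s = {f. \<exists>c0 c1 c2 c3 c4. f = (\<lambda>a b c. c0 * s0 a b c + c1 * s1 a b c + c2 * s2 a b c
                                      + c3 * s3 a b c + c4 * s4 a b c)}"

definition P35splus :: "poly3 set" where
  "P35splus = {f \<in> H35s. \<forall>a b c. 0 \<le> a \<longrightarrow> 0 \<le> b \<longrightarrow> 0 \<le> c \<longrightarrow> 0 \<le> f a b c}"

definition extremals :: "poly3 set \<Rightarrow> poly3 set" where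
  "extremals P = {f \<in> P. f \<noteq> (\<lambda>a b c. 0) \<and>
     (\<forall>g h. g \<in> P \<longrightarrow> h \<in> P \<longrightarrow> f = (\<lambda>a b c. g a b c + h a b c) \<longrightarrow>
        (\<exists>l\<ge>0. g = (\<lambda>a b c. l * f a b c)) \<and> (\<exists>l\<ge>0. h = (\<lambda>a b c. l * f a b c)))}"

definition eC :: "real \<Rightarrow> poly3" where
  "eC t = (\<lambda>a b c. s0 a b c - (t + 1) * s1 a b c + t * s2 a b c + (t + 1)^2 * s3 a b c)"

end

(* A form f in the cone that vanishes at (1,1,1) and (0,1,1) is determined by three
   coefficients, and on the edge (a,1,1) it equals a (a - 1)^2 q(a) for a quadratic q built
   from them; eC t is the form with q(a) = (a - t)^2.  Each of the hypotheses of (2)-(4), and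
   for extremality a bound 0 <= g <= eC t, forces q to be nonnegative around t with a double
   root at t, which makes f a nonnegative multiple of eC t.  Nonnegativity of eC t itself comes
   from two sums-of-squares certificates at a point (c + x, c + y, c) with c the least
   coordinate. *)

theory Submission
  imports Defs
begin

definition vanishing_form :: "real \<Rightarrow> real \<Rightarrow> real \<Rightarrow> poly3" where
  "vanishing_form c0 c1 c3 =
     (\<lambda>a b c. c0 * s0 a b c + c1 * s1 a b c - (c0 + c1) * s2 a b c + c3 * s3 a b c)"

definition cofactor :: "real \<Rightarrow> real \<Rightarrow> real \<Rightarrow> real \<Rightarrow> real" where
  "cofactor c0 c1 c3 x = c0 * (x + 1)^2 + 2 * c1 * (x + 1) + c3"

lemma P35splus_in_H35s: "f \<in> P35splus \<Longrightarrow> f \<in> H35s"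
  unfolding P35splus_def by blast

lemma H35s_vanishing_form:
  assumes "f \<in> H35s" "f 1 1 1 = 0" "f 0 1 1 = 0"
  shows "\<exists>c0 c1 c3. f = vanishing_form c0 c1 c3"
proof -
  obtain c0 c1 c2 c3 c4 where f: "f = (\<lambda>a b c. c0 * s0 a b c + c1 * s1 a b c + c2 * s2 a b c
                                      + c3 * s3 a b c + c4 * s4 a b c)"
    using assms(1) unfolding H35s_def by blast
  have "f 1 1 1 = 3 * c4" "f 0 1 1 = 2 * (c0 + c1 + c2)"
    unfolding f s0_def s1_def s2_def s3_def s4_def S2_def T2_def U3_def by simp_all
  then have c4: "c4 = 0" and c2: "c2 = - (c0 + c1)" using assms(2,3) by simp_all
  have "f = vanishing_form c0 c1 c3"
    unfolding f vanishing_form_def c2 c4 by (simp add: algebra_simps)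
  then show ?thesis by blast
qed

lemma vanishing_form_in_H35s: "vanishing_form c0 c1 c3 \<in> H35s"
  unfolding H35s_def vanishing_form_def
  by (rule CollectI, rule exI[of _ c0], rule exI[of _ c1], rule exI[of _ "- (c0 + c1)"],
      rule exI[of _ c3], rule exI[of _ 0]) (simp add: algebra_simps)

lemma vanishing_form_a11:
  "vanishing_form c0 c1 c3 a 1 1 = a * (a - 1)^2 * cofactor c0 c1 c3 a"
  unfolding vanishing_form_def cofactor_def s0_def s1_def s2_def s3_def S2_def T2_def U3_def
  by simp algebra

lemma vanishing_form_001: "vanishing_form c0 c1 c3 0 0 1 = c0"
  unfolding vanishing_form_def s0_def s1_def s2_def s3_def S2_def T2_def U3_def by simp

lemma cofactor_shift:
  "cofactor c0 c1 c3 (t + e) = cofactor c0 c1 c3 t + 2 * (c0 * (t + 1) + c1) * e + c0 * e^2"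
  unfolding cofactor_def by algebra

lemma cofactor_nonneg:
  assumes "vanishing_form c0 c1 c3 \<in> P35splus" "0 < a" "a \<noteq> 1"
  shows "0 \<le> cofactor c0 c1 c3 a"
proof -
  have "0 \<le> a * (a - 1)^2 * cofactor c0 c1 c3 a"
    using assms unfolding P35splus_def vanishing_form_a11[symmetric] by auto
  moreover have "0 < a * (a - 1)^2" using assms(2,3) by simp
  ultimately show ?thesis by (simp add: zero_le_mult_iff)
qed

lemma vanishing_form_a11_deriv:
  "deriv (\<lambda>a. vanishing_form c0 c1 c3 a 1 1)
     = (\<lambda>a. (a - 1) * (3 * a - 1) * cofactor c0 c1 c3 a + 2 * a * (a - 1)^2 * (c0 * (a + 1) + c1))"
proof
  fix x :: real
  show "deriv (\<lambda>a. vanishing_form c0 c1 c3 a 1 1) x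
      = (x - 1) * (3 * x - 1) * cofactor c0 c1 c3 x + 2 * x * (x - 1)^2 * (c0 * (x + 1) + c1)"
    unfolding vanishing_form_a11 cofactor_def
    by (rule DERIV_imp_deriv, (rule derivative_eq_intros refl)+) (simp, algebra)
qed

lemma vanishing_form_a11_deriv2:
  "deriv (\<lambda>x. deriv (\<lambda>a. vanishing_form c0 c1 c3 a 1 1) x)
     = (\<lambda>a. (6 * a - 4) * cofactor c0 c1 c3 a + 4 * (a - 1) * (3 * a - 1) * (c0 * (a + 1) + c1)
            + 2 * c0 * a * (a - 1)^2)"
proof
  fix x :: real
  show "deriv (\<lambda>x. deriv (\<lambda>a. vanishing_form c0 c1 c3 a 1 1) x) x
      = (6 * x - 4) * cofactor c0 c1 c3 x + 4 * (x - 1) * (3 * x - 1) * (c0 * (x + 1) + c1)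
        + 2 * c0 * x * (x - 1)^2"
    unfolding vanishing_form_a11_deriv cofactor_def
    by (rule DERIV_imp_deriv, (rule derivative_eq_intros refl)+) (simp, algebra)
qed

lemma eC_eq_vanishing_form: "eC t = vanishing_form 1 (- (t + 1)) ((t + 1)^2)"
  unfolding eC_def vanishing_form_def by (intro ext) algebra

lemma eC_a11: "eC t a 1 1 = a * (a - 1)^2 * (a - t)^2"
  unfolding eC_eq_vanishing_form vanishing_form_a11 cofactor_def by algebra

lemma vanishing_form_eq_smult_eC:
  assumes "cofactor c0 c1 c3 t = 0" "c0 * (t + 1) + c1 = 0"
  shows "vanishing_form c0 c1 c3 = (\<lambda>a b c. c0 * eC t a b c)"
proof -
  have "c1 = - c0 * (t + 1)" "c3 = c0 * (t + 1)^2"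
    using assms unfolding cofactor_def by algebra+
  then show ?thesis
    unfolding eC_eq_vanishing_form vanishing_form_def by (intro ext) algebra
qed

lemma smult_eC_of_double_root:
  assumes "vanishing_form c0 c1 c3 \<in> P35splus"
    and "cofactor c0 c1 c3 t = 0" "c0 * (t + 1) + c1 = 0"
  shows "\<exists>l\<ge>0. vanishing_form c0 c1 c3 = (\<lambda>a b c. l * eC t a b c)"
proof -
  have "0 \<le> vanishing_form c0 c1 c3 0 0 1" using assms(1) unfolding P35splus_def by simp
  then have "0 \<le> c0" by (simp add: vanishing_form_001)
  then show ?thesis using vanishing_form_eq_smult_eC[OF assms(2,3)] by blast
qed

lemma eC_explicit:
  "eC t a b c = a^5 + b^5 + c^5 - (t + 1) * (a^4*b + a*b^4 + b^4*c + b*c^4 + c^4*a + c*a^4)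
     + t * (a^3*b^2 + a^2*b^3 + b^3*c^2 + b^2*c^3 + c^3*a^2 + c^2*a^3)
     + (t + 1)^2 * a*b*c * (a^2 + b^2 + c^2) - (t^2 + 2*t) * a*b*c * (a*b + b*c + c*a)"
  unfolding eC_def s0_def s1_def s2_def s3_def S2_def T2_def U3_def by algebra

lemma eC_cyclic: "eC t a b c = eC t b c a"
  unfolding eC_explicit by algebra

(* The remainder of the first certificate is nonnegative when t <= 1 or c (t - 1) <= S,
   that of the second when c (t - 1) >= S. *)
lemma eC_shifted_sos_plus:
  fixes x y c t :: real
  defines "S \<equiv> x + y" and "k \<equiv> t - 1"
  shows "16 * S^2 * eC t (c + x) (c + y) c
    = c * (4*x*y*(2*k*c + t*S) + 4*((c*k - S)*(x - y)^2))^2 + 16*S*((c*k - S)*(x - y)^2)^2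
      + 16*x*y*(x - y)^2 * (c^3*k^2 + c^2*S*k*(3*t - 8) + c*S^2*(t - 3)^2 + S^3*(2 - t))"
  unfolding eC_explicit S_def k_def by algebra

lemma eC_shifted_sos_minus:
  fixes x y c t :: real
  defines "S \<equiv> x + y" and "k \<equiv> t - 1"
  shows "16 * S^2 * eC t (c + x) (c + y) c
    = c * (4*x*y*(2*k*c + t*S) - 4*((c*k - S)*(x - y)^2))^2 + 16*S*((c*k - S)*(x - y)^2)^2
      + 16*x*y*(x - y)^2 * (9*c^3*k^2 + c^2*S*k*(7*t - 16) + c*S^2*k*(t - 9) + S^3*(2 - t))"
  unfolding eC_explicit S_def k_def by algebra

lemma sos_plus_remainder_nonneg:
  fixes c S t :: real
  assumes "0 \<le> c" "0 \<le> S" "0 \<le> t" "t \<le> 2" "t \<le> 1 \<or> c * (t - 1) \<le> S"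
  shows "0 \<le> c^3*(t - 1)^2 + c^2*S*(t - 1)*(3*t - 8) + c*S^2*(t - 3)^2 + S^3*(2 - t)"
proof (cases "t \<le> 1")
  case True
  have "0 \<le> (t - 1) * (3*t - 8)" using True by (intro mult_nonpos_nonpos) auto
  then have "0 \<le> c^2*S*((t - 1)*(3*t - 8))" using assms by simp
  moreover have "0 \<le> c^3*(t - 1)^2" "0 \<le> c*S^2*(t - 3)^2" "0 \<le> S^3*(2 - t)"
    using assms by simp_all
  ultimately show ?thesis by (simp add: algebra_simps)
next
  case False
  define k where "k = t - 1"
  have k: "0 < k" "k \<le> 1" "c * k \<le> S" using False assms unfolding k_def by auto
  have factor: "k * (c^3*(t - 1)^2 + c^2*S*(t - 1)*(3*t - 8) + c*S^2*(t - 3)^2 + S^3*(2 - t))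
     = (S - c*k) * (c*k*((S - c*k) + 3*S*(1 - k)) + k*(1 - k)*S^2)"
    unfolding k_def by algebra
  have "0 \<le> (S - c*k) * (c*k*((S - c*k) + 3*S*(1 - k)) + k*(1 - k)*S^2)"
    using k assms by (intro mult_nonneg_nonneg add_nonneg_nonneg) auto
  then show ?thesis using k(1) unfolding factor[symmetric] by (simp add: zero_le_mult_iff)
qed

lemma sos_minus_remainder_nonneg:
  fixes c S t :: real
  assumes "0 \<le> c" "0 \<le> S" "1 < t" "t \<le> 2" "S \<le> c * (t - 1)"
  shows "0 \<le> 9*c^3*(t - 1)^2 + c^2*S*(t - 1)*(7*t - 16) + c*S^2*(t - 1)*(t - 9) + S^3*(2 - t)"
proof -
  define k where "k = t - 1"
  have k: "0 < k" "k \<le> 1" "S \<le> c * k" using assms unfolding k_def by auto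
  have factor: "k * (9*c^3*(t - 1)^2 + c^2*S*(t - 1)*(7*t - 16) + c*S^2*(t - 1)*(t - 9) + S^3*(2 - t))
     = (c*k - S) * (9*(c*k)^2 + k*(7*(c*k) - S)*S + k^2*S^2)"
    unfolding k_def by algebra
  have "0 \<le> 7*(c*k) - S" using k assms by (smt (verit) mult_nonneg_nonneg)
  then have "0 \<le> (c*k - S) * (9*(c*k)^2 + k*(7*(c*k) - S)*S + k^2*S^2)"
    using k assms by (intro mult_nonneg_nonneg add_nonneg_nonneg) auto
  then show ?thesis using k(1) unfolding factor[symmetric] by (simp add: zero_le_mult_iff)
qed

lemma eC_nonneg_shifted:
  fixes x y c t :: real
  assumes "0 \<le> c" "0 \<le> x" "0 \<le> y" "0 \<le> t" "t \<le> 2"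
  shows "0 \<le> eC t (c + x) (c + y) c"
proof (cases "x + y = 0")
  case True
  then have "x = 0" "y = 0" using assms by auto
  moreover have "eC t c c c = 0" unfolding eC_explicit by algebra
  ultimately show ?thesis by simp
next
  case False
  define S where "S = x + y"
  define k where "k = t - 1"
  have S: "0 < S" using False assms unfolding S_def by auto
  have xy: "0 \<le> 16*x*y*(x - y)^2" using assms by simp
  have "0 \<le> 16 * S^2 * eC t (c + x) (c + y) c"
  proof (cases "t \<le> 1 \<or> c * (t - 1) \<le> S")
    case True
    have E: "0 \<le> c^3*k^2 + c^2*S*k*(3*t - 8) + c*S^2*(t - 3)^2 + S^3*(2 - t)"
      using sos_plus_remainder_nonneg[of c S t] True assms S unfolding k_def
      by (simp add: algebra_simps)
    show ?thesis unfolding eC_shifted_sos_plus[of x y t c, folded S_def k_def]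
      by (intro add_nonneg_nonneg mult_nonneg_nonneg[OF xy E]) (use S assms in simp_all)
  next
    case False
    have E: "0 \<le> 9*c^3*k^2 + c^2*S*k*(7*t - 16) + c*S^2*k*(t - 9) + S^3*(2 - t)"
      using sos_minus_remainder_nonneg[of c S t] False assms S unfolding k_def
      by (simp add: algebra_simps)
    show ?thesis unfolding eC_shifted_sos_minus[of x y t c, folded S_def k_def]
      by (intro add_nonneg_nonneg mult_nonneg_nonneg[OF xy E]) (use S assms in simp_all)
  qed
  then show ?thesis using S by (simp add: zero_le_mult_iff)
qed

lemma eC_nonneg:
  assumes "0 \<le> a" "0 \<le> b" "0 \<le> c" "0 \<le> t" "t \<le> 2"
  shows "0 \<le> eC t a b c"
proof -
  consider "c \<le> a" "c \<le> b" | "a \<le> b" "a \<le> c" | "b \<le> a" "b \<le> c" by linarith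
  then show ?thesis
  proof cases
    case 1
    then show ?thesis using eC_nonneg_shifted[of c "a - c" "b - c" t] assms by simp
  next
    case 2
    then show ?thesis using eC_nonneg_shifted[of a "b - a" "c - a" t] assms eC_cyclic[of t a b c] by simp
  next
    case 3
    then show ?thesis
      using eC_nonneg_shifted[of b "c - b" "a - b" t] assms eC_cyclic[of t c a b] eC_cyclic[of t a b c]
      by simp
  qed
qed

lemma eC_in_P35splus: "0 \<le> t \<Longrightarrow> t \<le> 2 \<Longrightarrow> eC t \<in> P35splus"
  unfolding P35splus_def using eC_nonneg vanishing_form_in_H35s eC_eq_vanishing_form by auto

lemma quadratic_nonneg_at_right_const:
  fixes A B C d :: real
  assumes "0 < d" "\<forall>e. 0 < e \<and> e < d \<longrightarrow> 0 \<le> A + B * e + C * e^2"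
  shows "0 \<le> A"
proof -
  have "((\<lambda>e. A + B * e + C * e^2) \<longlongrightarrow> A + B * 0 + C * 0^2) (at_right 0)"
    by (intro tendsto_intros)
  moreover have "eventually (\<lambda>e. 0 \<le> A + B * e + C * e^2) (at_right (0::real))"
    using eventually_at_right_real[OF assms(1)] by eventually_elim (use assms(2) in auto)
  ultimately have "0 \<le> A + B * 0 + C * 0^2"
    by (rule tendsto_lowerbound) simp
  then show ?thesis by simp
qed

lemma quadratic_nonneg_at_right_linear:
  fixes B C d :: real
  assumes "0 < d" "\<forall>e. 0 < e \<and> e < d \<longrightarrow> 0 \<le> B * e + C * e^2"
  shows "0 \<le> B"
proof (rule quadratic_nonneg_at_right_const[OF assms(1)], intro allI impI)
  fix e :: real assume e: "0 < e \<and> e < d"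
  have "e * (B + C * e + 0 * e^2) = B * e + C * e^2" by algebra
  then have "0 \<le> e * (B + C * e + 0 * e^2)" using assms(2) e by simp
  then show "0 \<le> B + C * e + 0 * e^2" using e by (simp add: zero_le_mult_iff)
qed

lemma punctured_nbhd_in_domain:
  fixes t :: real
  assumes "0 < t"
  obtains d where "0 < d" "\<And>e. 0 < e \<Longrightarrow> e < d \<Longrightarrow> 0 < t - e \<and> t + e \<noteq> 1 \<and> t - e \<noteq> 1"
proof (cases "t = 1")
  case True
  show ?thesis by (rule that[of 1]) (use True in auto)
next
  case False
  show ?thesis by (rule that[of "min t \<bar>t - 1\<bar>"]) (use assms False in \<open>auto simp: abs_if\<close>)
qed

lemma cofactor_double_root:
  assumes "vanishing_form c0 c1 c3 \<in> P35splus" "0 < t" "cofactor c0 c1 c3 t = 0"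
  shows "c0 * (t + 1) + c1 = 0"
proof -
  define L where "L = 2 * (c0 * (t + 1) + c1)"
  obtain d where d: "0 < d"
    and near: "\<And>e. 0 < e \<Longrightarrow> e < d \<Longrightarrow> 0 < t - e \<and> t + e \<noteq> 1 \<and> t - e \<noteq> 1"
    using punctured_nbhd_in_domain[OF assms(2)] by blast
  have shift: "cofactor c0 c1 c3 (t + e) = L * e + c0 * e^2" for e
    using cofactor_shift[of c0 c1 c3 t e] assms(3) unfolding L_def by simp
  have "0 \<le> L * e + c0 * e^2" if "0 < e" "e < d" for e
    using cofactor_nonneg[OF assms(1), of "t + e"] near[OF that] assms(2) that
    unfolding shift by simp
  moreover have "0 \<le> (- L) * e + c0 * e^2" if "0 < e" "e < d" for e
    using cofactor_nonneg[OF assms(1), of "t + - e"] near[OF that] shift[of "- e"] by simp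
  ultimately have "0 \<le> L" "0 \<le> - L"
    using quadratic_nonneg_at_right_linear[OF d] by blast+
  then show ?thesis unfolding L_def by simp
qed

lemma smult_eC_of_zeros:
  assumes "f \<in> P35splus" "0 < t" "t \<noteq> 1" "f t 1 1 = 0" "f 1 1 1 = 0" "f 0 1 1 = 0"
  shows "\<exists>l\<ge>0. f = (\<lambda>a b c. l * eC t a b c)"
proof -
  obtain c0 c1 c3 where f: "f = vanishing_form c0 c1 c3"
    using H35s_vanishing_form[OF P35splus_in_H35s[OF assms(1)] assms(5,6)] by blast
  have "t * (t - 1)^2 * cofactor c0 c1 c3 t = 0" using assms(4) by (simp add: f vanishing_form_a11)
  then have root: "cofactor c0 c1 c3 t = 0" using assms(2,3) by simp
  have P: "vanishing_form c0 c1 c3 \<in> P35splus" using assms(1) f by simp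
  show ?thesis
    unfolding f by (rule smult_eC_of_double_root[OF P root cofactor_double_root[OF P assms(2) root]])
qed

lemma smult_eC0_of_flat_zero:
  assumes "f \<in> P35splus" "f 1 1 1 = 0" "f 0 1 1 = 0"
    "deriv (\<lambda>a. f a 1 1) 0 = 0" "deriv (\<lambda>x. deriv (\<lambda>a. f a 1 1) x) 0 = 0"
  shows "\<exists>l\<ge>0. f = (\<lambda>a b c. l * eC 0 a b c)"
proof -
  obtain c0 c1 c3 where f: "f = vanishing_form c0 c1 c3"
    using H35s_vanishing_form[OF P35splus_in_H35s[OF assms(1)] assms(2,3)] by blast
  have P: "vanishing_form c0 c1 c3 \<in> P35splus" using assms(1) f by simp
  have root: "cofactor c0 c1 c3 0 = 0"
    using assms(4) by (simp add: f vanishing_form_a11_deriv)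
  have "c0 * (0 + 1) + c1 = 0"
    using assms(5) root by (simp add: f vanishing_form_a11_deriv2)
  from smult_eC_of_double_root[OF P root this] show ?thesis unfolding f .
qed

lemma smult_eC1_of_deriv2_zero:
  assumes "f \<in> P35splus" "f 0 1 1 = 0" "f 1 1 1 = 0"
    "deriv (\<lambda>x. deriv (\<lambda>a. f a 1 1) x) 1 = 0"
  shows "\<exists>l\<ge>0. f = (\<lambda>a b c. l * eC 1 a b c)"
proof -
  obtain c0 c1 c3 where f: "f = vanishing_form c0 c1 c3"
    using H35s_vanishing_form[OF P35splus_in_H35s[OF assms(1)] assms(3,2)] by blast
  have P: "vanishing_form c0 c1 c3 \<in> P35splus" using assms(1) f by simp
  have root: "cofactor c0 c1 c3 1 = 0"
    using assms(4) by (simp add: f vanishing_form_a11_deriv2)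
  from smult_eC_of_double_root[OF P root cofactor_double_root[OF P _ root]]
  show ?thesis unfolding f by simp
qed

lemma le_eC_imp_smult_eC:
  assumes "0 \<le> t" "g \<in> P35splus"
    and le: "\<forall>a b c. 0 \<le> a \<longrightarrow> 0 \<le> b \<longrightarrow> 0 \<le> c \<longrightarrow> g a b c \<le> eC t a b c"
  shows "\<exists>l\<ge>0. g = (\<lambda>a b c. l * eC t a b c)"
proof -
  have g_nonneg: "0 \<le> g a b c" if "0 \<le> a" "0 \<le> b" "0 \<le> c" for a b c
    using assms(2) that unfolding P35splus_def by blast
  have "g 1 1 1 = 0" "g 0 1 1 = 0"
    using le[rule_format, of 1 1 1] le[rule_format, of 0 1 1] g_nonneg[of 1 1 1] g_nonneg[of 0 1 1]
    by (simp_all add: eC_a11)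
  then obtain c0 c1 c3 where g: "g = vanishing_form c0 c1 c3"
    using H35s_vanishing_form[OF P35splus_in_H35s[OF assms(2)]] by blast
  have P: "vanishing_form c0 c1 c3 \<in> P35splus" using assms(2) g by simp
  have upper: "cofactor c0 c1 c3 a \<le> (a - t)^2" if "0 < a" "a \<noteq> 1" for a
  proof -
    have "a * (a - 1)^2 * cofactor c0 c1 c3 a \<le> a * (a - 1)^2 * (a - t)^2"
      using le[rule_format, of a 1 1] that by (simp add: g vanishing_form_a11 eC_a11)
    moreover have "0 < a * (a - 1)^2" using that by simp
    ultimately show ?thesis by (rule mult_le_cancel_left_pos[THEN iffD1, rotated])
  qed
  \<comment> \<open>just to the right of t the cofactor lies between 0 and (a - t)^2, hence has a double root at t\<close>
  define M where "M = cofactor c0 c1 c3 t"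
  define L where "L = 2 * (c0 * (t + 1) + c1)"
  define d :: real where "d = (if t < 1 then 1 - t else 1)"
  have d: "0 < d" unfolding d_def by simp
  have near: "0 < t + e" "t + e \<noteq> 1" if "0 < e" "e < d" for e
    using assms(1) that unfolding d_def by (auto split: if_splits)
  have shift: "cofactor c0 c1 c3 (t + e) = M + L * e + c0 * e^2" for e
    unfolding M_def L_def cofactor_shift by simp
  have lower_bd: "0 \<le> M + L * e + c0 * e^2" if "0 < e" "e < d" for e
    using cofactor_nonneg[OF P near[OF that]] unfolding shift .
  have upper_bd: "0 \<le> - M + (- L) * e + (1 - c0) * e^2" if "0 < e" "e < d" for e
    using upper[OF near[OF that]] unfolding shift by (simp add: algebra_simps)
  have "0 \<le> M" "0 \<le> - M"
    using quadratic_nonneg_at_right_const[OF d, of M L c0] quadratic_nonneg_at_right_const[OF d, of "- M" "- L" "1 - c0"]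
      lower_bd upper_bd by simp_all
  then have M0: "M = 0" by simp
  have "0 \<le> L" "0 \<le> - L"
    using quadratic_nonneg_at_right_linear[OF d, of L c0] quadratic_nonneg_at_right_linear[OF d, of "- L" "1 - c0"]
      lower_bd upper_bd unfolding M0 by simp_all
  then have "c0 * (t + 1) + c1 = 0" unfolding L_def by simp
  from smult_eC_of_double_root[OF P M0[unfolded M_def] this] show ?thesis unfolding g .
qed

lemma eC_extremal:
  assumes "0 \<le> t" "t \<le> 2"
  shows "eC t \<in> extremals P35splus"
proof -
  have "eC t 0 0 1 = 1" by (simp add: eC_eq_vanishing_form vanishing_form_001)
  then have nonzero: "eC t \<noteq> (\<lambda>a b c. 0)" by force
  have summand: "\<exists>l\<ge>0. g = (\<lambda>a b c. l * eC t a b c)"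
    if "g \<in> P35splus" "h \<in> P35splus" "eC t = (\<lambda>a b c. g a b c + h a b c)" for g h
  proof (rule le_eC_imp_smult_eC[OF assms(1) that(1)], intro allI impI)
    fix a b c :: real
    assume "0 \<le> a" "0 \<le> b" "0 \<le> c"
    then have "0 \<le> h a b c" using that(2) unfolding P35splus_def by blast
    then show "g a b c \<le> eC t a b c" using that(3) by simp
  qed
  have "(\<exists>l\<ge>0. g = (\<lambda>a b c. l * eC t a b c)) \<and> (\<exists>l\<ge>0. h = (\<lambda>a b c. l * eC t a b c))"
    if g: "g \<in> P35splus" and h: "h \<in> P35splus" and sum: "eC t = (\<lambda>a b c. g a b c + h a b c)" for g h
  proof
    show "\<exists>l\<ge>0. g = (\<lambda>a b c. l * eC t a b c)" by (rule summand[OF g h sum])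
    have "eC t = (\<lambda>a b c. h a b c + g a b c)" unfolding sum by (simp add: add.commute)
    then show "\<exists>l\<ge>0. h = (\<lambda>a b c. l * eC t a b c)" by (rule summand[OF h g])
  qed
  then show ?thesis unfolding extremals_def using eC_in_P35splus[OF assms] nonzero by blast
qed

theorem theorem4p3:
  shows "(\<forall>t::real. 0 \<le> t \<and> t \<le> 2 \<longrightarrow> eC t \<in> extremals P35splus)
   \<and> (\<forall>(t::real) f. 0 < t \<and> t \<le> 2 \<and> t \<noteq> 1 \<and> f \<in> P35splus
        \<and> f t 1 1 = 0 \<and> f 1 1 1 = 0 \<and> f 0 1 1 = 0
        \<longrightarrow> (\<exists>l\<ge>0. f = (\<lambda>a b c. l * eC t a b c)))
   \<and> (\<forall>f. f \<in> P35splus \<and> f 1 1 1 = 0 \<and> f 0 1 1 = 0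
        \<and> deriv (\<lambda>a. f a 1 1) 0 = 0
        \<and> deriv (\<lambda>x. deriv (\<lambda>a. f a 1 1) x) 0 = 0
        \<longrightarrow> (\<exists>l\<ge>0. f = (\<lambda>a b c. l * eC 0 a b c)))
   \<and> (\<forall>f. f \<in> P35splus \<and> f 0 1 1 = 0 \<and> f 1 1 1 = 0
        \<and> deriv (\<lambda>x. deriv (\<lambda>a. f a 1 1) x) 1 = 0
        \<longrightarrow> (\<exists>l\<ge>0. f = (\<lambda>a b c. l * eC 1 a b c)))"
  using eC_extremal smult_eC_of_zeros smult_eC0_of_flat_zero smult_eC1_of_deriv2_zero by blast

end
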